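(* Let $(S,H)$ be a Brill–Noether general K3 surface of degree $10$ ($H$ very ample, $H^2=10$), and let $(\omega,\beta)$ range over pairs of classes in $\mathrm{NS}(S)_{\mathbb Q}$ with $\omega$ ample. Then the equation $$Z_{\omega,\beta}(r,\Delta,s)=Z_{\omega,\beta}(-4r-5s-2\Delta\cdot H,\ (2r+2s+\Delta\cdot H)H-\Delta,\ -5r-4s-2\Delta\cdot H)$$ holds for all $(r,\Delta,s)\in N(S)$ if and only if $\omega=\tfrac15H$ and $\beta=-\tfrac25H$; and the equation $$Z_{\omega,\beta}(r,\Delta,s)=Z_{\omega,\beta}(-9r-5s-3\Delta\cdot H,\ (6r+3s+2\Delta\cdot H)H-\Delta,\ -20r-9s-6\Delta\cdot H)$$ holds for all $(r,\Delta,s)\in N(S)$ if and only if $\omega=\tfrac15H$ and $\beta=-\tfrac35H$.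
   Context: $N(S)=H^0(S,\mathbb Z)\oplus\mathrm{NS}(S)\oplus H^4(S,\mathbb Z)$ with elements $(r,\Delta,s)$, and $Z_{\omega,\beta}(r,\Delta,s)=\tfrac12(2\beta\cdot\Delta-2s+r(\omega^2-\beta^2))+\sqrt{-1}(\Delta-r\beta)\cdot\omega$. *)

theory Defs
  imports "HOL-Analysis.Analysis"
begin

text \<open>NS(S) is modelled as the lattice int^'n with an integral Gram matrix G;
  NS(S)_Q is rat^'n with the same form.\<close>

definition ratv :: "int^'n \<Rightarrow> rat^'n" where
  "ratv x = (\<chi> i. of_int (x $ i))"

definition ibil :: "int^'n^'n \<Rightarrow> int^'n \<Rightarrow> int^'n \<Rightarrow> int" where
  "ibil G x y = (\<Sum>i\<in>UNIV. \<Sum>j\<in>UNIV. x $ i * G $ i $ j * y $ j)"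

definition qbil :: "int^'n^'n \<Rightarrow> rat^'n \<Rightarrow> rat^'n \<Rightarrow> rat" where
  "qbil G x y = (\<Sum>i\<in>UNIV. \<Sum>j\<in>UNIV. x $ i * of_int (G $ i $ j) * y $ j)"

definition Zc :: "int^'n^'n \<Rightarrow> rat^'n \<Rightarrow> rat^'n \<Rightarrow> int \<Rightarrow> int^'n \<Rightarrow> int \<Rightarrow> complex" where
  "Zc G \<omega> \<beta> r \<Delta> s =
     Complex (real_of_rat ((1/2) * (2 * qbil G \<beta> (ratv \<Delta>) - 2 * of_int s
                 + of_int r * (qbil G \<omega> \<omega> - qbil G \<beta> \<beta>))))
             (real_of_rat (qbil G (ratv \<Delta> - of_int r *s \<beta>) \<omega>))"

end

theory Submission
  imports Defs
begin

text \<open>Invariance of \<open>Z\<close> at the Mukai vectors \<open>(0, \<Delta>, 0)\<close> says that \<open>\<Delta>\<cdot>\<omega>\<close> and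
  \<open>\<Delta>\<cdot>\<beta>\<close> are fixed multiples of \<open>\<Delta>\<cdot>H\<close> for every \<open>\<Delta>\<close>; since the intersection form is
  nondegenerate, \<open>\<omega>\<close> and \<open>\<beta>\<close> are rational multiples \<open>x H\<close>, \<open>y H\<close>. On this line \<open>Z\<close>
  depends on \<open>\<Delta>\<close> only through \<open>\<Delta>\<cdot>H\<close>, and invariance at \<open>(1, 0, 0)\<close> gives one
  equation from the imaginary part fixing \<open>y\<close> (as \<open>x \<noteq> 0\<close>) and one from the real part
  fixing \<open>x\<^sup>2\<close>, with \<open>x > 0\<close> by ampleness. Conversely, for these values invariance is a
  linear identity in \<open>(r, \<Delta>\<cdot>H, s)\<close>.\<close>

lemma qbil_add_left: "qbil G (x + y) z = qbil G x z + qbil G y z"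
  by (simp add: qbil_def algebra_simps sum.distrib)
lemma qbil_diff_left: "qbil G (x - y) z = qbil G x z - qbil G y z"
  by (simp add: qbil_def algebra_simps sum_subtractf)
lemma qbil_scale_left: "qbil G (c *s x) z = c * qbil G x z"
  by (simp add: qbil_def sum_distrib_left algebra_simps)
lemma qbil_diff_right: "qbil G z (x - y) = qbil G z x - qbil G z y"
  by (simp add: qbil_def algebra_simps sum_subtractf)
lemma qbil_scale_right: "qbil G z (c *s x) = c * qbil G z x"
  by (simp add: qbil_def sum_distrib_left algebra_simps)

lemma qbil_commute:
  assumes "\<forall>i j. G $ i $ j = G $ j $ i"
  shows "qbil G x y = qbil G y x"
  unfolding qbil_def using assms by (subst sum.swap) (simp add: algebra_simps)

lemma ratv_diff: "ratv (x - y) = ratv x - ratv y"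
  by (simp add: ratv_def vec_eq_iff)
lemma ratv_scale: "ratv (a *s x) = of_int a *s ratv x"
  by (simp add: ratv_def vec_eq_iff)

lemma of_int_ibil: "of_int (ibil G x y) = qbil G (ratv x) (ratv y)"
  by (simp add: ibil_def qbil_def ratv_def)

lemma ibil_add_left: "ibil G (x + y) z = ibil G x z + ibil G y z"
  by (simp add: ibil_def algebra_simps sum.distrib)
lemma ibil_diff_left: "ibil G (x - y) z = ibil G x z - ibil G y z"
  by (simp add: ibil_def algebra_simps sum_subtractf)
lemma ibil_scale_left: "ibil G (c *s x) z = c * ibil G x z"
  by (simp add: ibil_def sum_distrib_left algebra_simps)
lemma ibil_0_left [simp]: "ibil G 0 z = 0"
  by (simp add: ibil_def)

lemma eq_0_if_qbil_lattice_eq_0: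
  fixes G :: "int^'n^'n" and v :: "rat^'n"
  assumes nondeg: "det G \<noteq> 0" and orth: "\<forall>\<Delta>. qbil G v (ratv \<Delta>) = 0"
  shows "v = 0"
proof -
  define M :: "rat^'n^'n" where "M = (\<chi> i j. of_int (G $ i $ j))"
  have "det M = of_int (det G)"
    by (simp add: M_def det_def)
  then obtain B where B: "M ** B = mat 1"
    using nondeg invertible_det_nz[of M] unfolding invertible_def by auto
  have "(v v* M) $ j = qbil G v (ratv (axis j 1))" for j
    by (simp add: M_def vector_matrix_mult_def qbil_def ratv_def axis_def if_distrib cong: if_cong)
  then have "v v* M = 0"
    using orth by (simp add: vec_eq_iff)
  then show "v = 0"
    by (metis B vector_matrix_mul_assoc vector_matrix_mul_rid vector_matrix_mult_0)
qed

lemma eq_smult_H_if_pairing_proportional: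
  fixes G :: "int^'n^'n" and H :: "int^'n" and v :: "rat^'n"
  assumes sym: "\<forall>i j. G $ i $ j = G $ j $ i" and nondeg: "det G \<noteq> 0"
    and proportional: "\<forall>\<Delta>. qbil G v (ratv \<Delta>) = t * of_int (ibil G \<Delta> H)"
  shows "v = t *s ratv H"
proof -
  have "qbil G (v - t *s ratv H) (ratv \<Delta>) = 0" for \<Delta>
    using proportional qbil_commute[OF sym, of "ratv H" "ratv \<Delta>"]
    by (simp add: qbil_diff_left qbil_scale_left of_int_ibil)
  then have "v - t *s ratv H = 0"
    using eq_0_if_qbil_lattice_eq_0[OF nondeg] by blast
  then show ?thesis
    by simp
qed

lemma on_H_line_if_Zc_invariant:
  fixes G :: "int^'n^'n" and H :: "int^'n" and \<omega> \<beta> :: "rat^'n" and c f k :: int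
  assumes sym: "\<forall>i j. G $ i $ j = G $ j $ i" and nondeg: "det G \<noteq> 0"
    and inv: "\<forall>\<Delta>. Zc G \<omega> \<beta> 0 \<Delta> 0 =
      Zc G \<omega> \<beta> (c * ibil G \<Delta> H) ((f * ibil G \<Delta> H) *s H - \<Delta>) (k * ibil G \<Delta> H)"
  shows "\<exists>x y. \<omega> = x *s ratv H \<and> \<beta> = y *s ratv H"
proof -
  \<comment> \<open>\<open>a\<close> and \<open>b\<close> are read off the imaginary and real parts of the invariance.\<close>
  define a :: rat where "a = (of_int f * qbil G (ratv H) \<omega> - of_int c * qbil G \<beta> \<omega>) / 2"
  define b :: rat where
    "b = (2 * of_int f * qbil G \<beta> (ratv H) + of_int c * (qbil G \<omega> \<omega> - qbil G \<beta> \<beta>) - 2 * of_int k) / 4"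
  have "qbil G \<omega> (ratv \<Delta>) = a * of_int (ibil G \<Delta> H)
    \<and> qbil G \<beta> (ratv \<Delta>) = b * of_int (ibil G \<Delta> H)" for \<Delta>
  proof -
    have "Zc G \<omega> \<beta> 0 \<Delta> 0 =
      Zc G \<omega> \<beta> (c * ibil G \<Delta> H) ((f * ibil G \<Delta> H) *s H - \<Delta>) (k * ibil G \<Delta> H)"
      using inv by blast
    then have "2 * qbil G \<omega> (ratv \<Delta>) = 2 * a * of_int (ibil G \<Delta> H)
      \<and> 4 * qbil G \<beta> (ratv \<Delta>) = 4 * b * of_int (ibil G \<Delta> H)"
      unfolding Zc_def complex.inject of_rat_eq_iff a_def b_def
      by (simp add: qbil_add_left qbil_diff_left qbil_scale_left qbil_diff_right qbil_scale_right
          ratv_diff ratv_scale qbil_commute[OF sym, of \<omega> "ratv \<Delta>"] algebra_simps)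
    then show ?thesis
      by simp
  qed
  then show ?thesis
    using eq_smult_H_if_pairing_proportional[OF sym nondeg] by blast
qed

lemma Zc_on_H_line:
  fixes G :: "int^'n^'n" and H :: "int^'n" and \<omega> \<beta> :: "rat^'n"
  assumes sym: "\<forall>i j. G $ i $ j = G $ j $ i" and H2: "ibil G H H = n"
    and \<omega>: "\<omega> = x *s ratv H" and \<beta>: "\<beta> = y *s ratv H"
  shows "Zc G \<omega> \<beta> r \<Delta> s =
    Complex (of_rat (y * of_int (ibil G \<Delta> H) - of_int s + of_int r * of_int n * (x\<^sup>2 - y\<^sup>2) / 2))
            (of_rat (x * (of_int (ibil G \<Delta> H) - of_int r * of_int n * y)))"
proof -
  have "qbil G (ratv H) (ratv H) = of_int n"
    using H2 of_int_ibil[of G H H] by simp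
  then show ?thesis
    using qbil_commute[OF sym, of "ratv H" "ratv \<Delta>"]
    by (simp add: Zc_def \<omega> \<beta> qbil_diff_left qbil_scale_left qbil_scale_right of_int_ibil
        power2_eq_square field_simps)
qed

lemma Zc_invariant_iff_first:
  fixes G :: "int^'n^'n" and H :: "int^'n" and \<omega> \<beta> :: "rat^'n"
  assumes sym: "\<forall>i j. G $ i $ j = G $ j $ i" and nondeg: "det G \<noteq> 0"
    and H2: "ibil G H H = 10" and pos: "qbil G (ratv H) \<omega> > 0"
  shows "(\<forall>r \<Delta> s. Zc G \<omega> \<beta> r \<Delta> s =
            Zc G \<omega> \<beta> (-4 * r - 5 * s - 2 * ibil G \<Delta> H)
                        ((2 * r + 2 * s + ibil G \<Delta> H) *s H - \<Delta>)
                        (-5 * r - 4 * s - 2 * ibil G \<Delta> H))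
         \<longleftrightarrow> (\<omega> = (1/5) *s ratv H \<and> \<beta> = (-2/5) *s ratv H)" (is "?invariant \<longleftrightarrow> _")
proof
  assume inv: ?invariant
  have "\<forall>\<Delta>. Zc G \<omega> \<beta> 0 \<Delta> 0 =
      Zc G \<omega> \<beta> (-2 * ibil G \<Delta> H) ((1 * ibil G \<Delta> H) *s H - \<Delta>) (-2 * ibil G \<Delta> H)"
    using inv[rule_format, of 0 _ 0] by simp
  then obtain x y where \<omega>: "\<omega> = x *s ratv H" and \<beta>: "\<beta> = y *s ratv H"
    using on_H_line_if_Zc_invariant[OF sym nondeg] by blast
  have "qbil G (ratv H) (ratv H) = 10"
    using H2 of_int_ibil[of G H H] by simp
  then have "x > 0"
    using pos by (simp add: \<omega> qbil_scale_right)
  have "Zc G \<omega> \<beta> 1 0 0 = Zc G \<omega> \<beta> (-4) (2 *s H) (-5)"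
    using inv[rule_format, of 1 0 0] by simp
  then have im: "x * (50 * y + 20) = 0" and re: "25 * (x\<^sup>2 - y\<^sup>2) = 20 * y + 5"
    by (simp_all add: Zc_on_H_line[OF sym H2 \<omega> \<beta>] ibil_scale_left H2 of_rat_eq_iff field_simps)
  from im \<open>x > 0\<close> have "y = -2/5"
    by simp
  with re have "x\<^sup>2 = (1/5)\<^sup>2"
    by (simp add: power2_eq_square)
  with \<open>x > 0\<close> have "x = 1/5"
    using power2_eq_iff_nonneg by fastforce
  with \<open>y = -2/5\<close> show "\<omega> = (1/5) *s ratv H \<and> \<beta> = (-2/5) *s ratv H"
    by (simp add: \<omega> \<beta>)
next
  assume "\<omega> = (1/5) *s ratv H \<and> \<beta> = (-2/5) *s ratv H"
  then have \<omega>: "\<omega> = (1/5) *s ratv H" and \<beta>: "\<beta> = (-2/5) *s ratv H"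
    by auto
  show ?invariant
    by (simp add: Zc_on_H_line[OF sym H2 \<omega> \<beta>] ibil_add_left ibil_diff_left ibil_scale_left H2
        of_rat_eq_iff field_simps)
qed

lemma Zc_invariant_iff_second:
  fixes G :: "int^'n^'n" and H :: "int^'n" and \<omega> \<beta> :: "rat^'n"
  assumes sym: "\<forall>i j. G $ i $ j = G $ j $ i" and nondeg: "det G \<noteq> 0"
    and H2: "ibil G H H = 10" and pos: "qbil G (ratv H) \<omega> > 0"
  shows "(\<forall>r \<Delta> s. Zc G \<omega> \<beta> r \<Delta> s =
            Zc G \<omega> \<beta> (-9 * r - 5 * s - 3 * ibil G \<Delta> H)
                        ((6 * r + 3 * s + 2 * ibil G \<Delta> H) *s H - \<Delta>)
                        (-20 * r - 9 * s - 6 * ibil G \<Delta> H))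
         \<longleftrightarrow> (\<omega> = (1/5) *s ratv H \<and> \<beta> = (-3/5) *s ratv H)" (is "?invariant \<longleftrightarrow> _")
proof
  assume inv: ?invariant
  have "\<forall>\<Delta>. Zc G \<omega> \<beta> 0 \<Delta> 0 =
      Zc G \<omega> \<beta> (-3 * ibil G \<Delta> H) ((2 * ibil G \<Delta> H) *s H - \<Delta>) (-6 * ibil G \<Delta> H)"
    using inv[rule_format, of 0 _ 0] by simp
  then obtain x y where \<omega>: "\<omega> = x *s ratv H" and \<beta>: "\<beta> = y *s ratv H"
    using on_H_line_if_Zc_invariant[OF sym nondeg] by blast
  have "qbil G (ratv H) (ratv H) = 10"
    using H2 of_int_ibil[of G H H] by simp
  then have "x > 0"
    using pos by (simp add: \<omega> qbil_scale_right)
  have "Zc G \<omega> \<beta> 1 0 0 = Zc G \<omega> \<beta> (-9) (6 *s H) (-20)"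
    using inv[rule_format, of 1 0 0] by simp
  then have im: "x * (100 * y + 60) = 0" and re: "50 * (x\<^sup>2 - y\<^sup>2) = 60 * y + 20"
    by (simp_all add: Zc_on_H_line[OF sym H2 \<omega> \<beta>] ibil_scale_left H2 of_rat_eq_iff field_simps)
  from im \<open>x > 0\<close> have "y = -3/5"
    by simp
  with re have "x\<^sup>2 = (1/5)\<^sup>2"
    by (simp add: power2_eq_square)
  with \<open>x > 0\<close> have "x = 1/5"
    using power2_eq_iff_nonneg by fastforce
  with \<open>y = -3/5\<close> show "\<omega> = (1/5) *s ratv H \<and> \<beta> = (-3/5) *s ratv H"
    by (simp add: \<omega> \<beta>)
next
  assume "\<omega> = (1/5) *s ratv H \<and> \<beta> = (-3/5) *s ratv H"
  then have \<omega>: "\<omega> = (1/5) *s ratv H" and \<beta>: "\<beta> = (-3/5) *s ratv H"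
    by auto
  show ?invariant
    by (simp add: Zc_on_H_line[OF sym H2 \<omega> \<beta>] ibil_add_left ibil_diff_left ibil_scale_left H2
        of_rat_eq_iff field_simps)
qed

theorem proposition6p2:
  fixes G :: "int^'n^'n" and H :: "int^'n" and ample :: "rat^'n \<Rightarrow> bool"
    and \<omega> \<beta> :: "rat^'n"
  assumes sym: "\<forall>i j. G $ i $ j = G $ j $ i"
    and even_form: "\<forall>i. even (G $ i $ i)"
    and nondeg: "det G \<noteq> 0"
    and H2: "ibil G H H = 10"
    and hodge: "\<forall>y. ibil G H y = 0 \<longrightarrow> y \<noteq> 0 \<longrightarrow> ibil G y y < 0"
    and H_ample: "ample (ratv H)"
    and ample_pos: "\<forall>x y. ample x \<longrightarrow> ample y \<longrightarrow> qbil G x y > 0"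
    and \<omega>_ample: "ample \<omega>"
  shows "((\<forall>r \<Delta> s. Zc G \<omega> \<beta> r \<Delta> s =
            Zc G \<omega> \<beta> (-4 * r - 5 * s - 2 * ibil G \<Delta> H)
                        ((2 * r + 2 * s + ibil G \<Delta> H) *s H - \<Delta>)
                        (-5 * r - 4 * s - 2 * ibil G \<Delta> H))
         \<longleftrightarrow> (\<omega> = (1/5) *s ratv H \<and> \<beta> = (-2/5) *s ratv H))
       \<and> ((\<forall>r \<Delta> s. Zc G \<omega> \<beta> r \<Delta> s =
            Zc G \<omega> \<beta> (-9 * r - 5 * s - 3 * ibil G \<Delta> H)
                        ((6 * r + 3 * s + 2 * ibil G \<Delta> H) *s H - \<Delta>)
                        (-20 * r - 9 * s - 6 * ibil G \<Delta> H))
         \<longleftrightarrow> (\<omega> = (1/5) *s ratv H \<and> \<beta> = (-3/5) *s ratv H))"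
proof -
  \<comment> \<open>Evenness of the form and the Hodge index condition are not needed.\<close>
  have "qbil G (ratv H) \<omega> > 0"
    using ample_pos H_ample \<omega>_ample by blast
  then show ?thesis
    using Zc_invariant_iff_first Zc_invariant_iff_second sym nondeg H2 by blast
qed

end
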